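(* Suppose $f$ is convex and $L_f$-smooth, $L_{\mathbf S}^{\max}<\infty$, $\tilde f$ has a minimizer $x^\star_{\mathcal D}$, and the gradient estimator satisfies the ABC conditions with constants $A,B,C\ge0$. Let $D_{A,B}=A+BL_fL_{\mathbf S}^{\max}$, $0<\gamma\le1/(2D_{A,B})$, $T\ge1$, and let $\bar x^T$ be chosen uniformly at random from the iterates $x^0,\dots,x^{T-1}$ of inexact Double Sketched SGD. Then $$\mathbb E\big[\tilde f(\bar x^T)-\tilde f^{\inf}\big]\le\frac{\|x^0-x^\star_{\mathcal D}\|^2}{\gamma T}+\gamma\Big(2\big(\tilde f^{\inf}-f^{\inf}\big)D_{A,B}+C\Big).$$
   Context: Let $f:\mathbb R^d\to\mathbb R$, fix $s\in\mathbb R^d$, and let $\mathcal D$ be a distribution of random matrices $\mathbf S\in\mathbb R^{d\times d}$ with $\mathbb E[\mathbf S]=I$ and $\mathbb E[\mathbf S^\top\mathbf S]$ finite. Define $f_{\mathbf S}(x)=f(s+\mathbf S(x-s))$, $f_{\mathbf S}^{\inf}=\inf_x f_{\mathbf S}(x)$, $\tilde f(x)=\mathbb E_{\mathbf S\sim\mathcal D}[f_{\mathbf S}(x)]$, $\tilde f^{\inf}=\inf_x\tilde f(x)$, and $L_{\mathbf S}^{\max}$ the smallest constant with $\lambda_{\max}(\mathbf S^\top\mathbf S)\le L_{\mathbf S}^{\max}$ a.s. For each $\mathbf S$ and $x$ let $g_{\mathbf S}(x)$ be a random vector satisfying the ABC conditions: $\mathbb E[g_{\mathbf S}(x)]=\nabla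 f_{\mathbf S}(x)$ and $\mathbb E\|g_{\mathbf S}(x)\|^2\le 2A(f_{\mathbf S}(x)-f_{\mathbf S}^{\inf})+B\|\nabla f_{\mathbf S}(x)\|^2+C$ for all $x$ (expectation over the estimator's randomness with $\mathbf S$ fixed). Inexact Double Sketched SGD: given $x^0$, for $t\ge0$ draw $\mathbf S^t\sim\mathcal D$ independently of the past and set $x^{t+1}=x^t-\gamma g_{\mathbf S^t}(x^t)$. $f$ is $L_f$-smooth if differentiable, $f(x+h)\le f(x)+\langle\nabla f(x),h\rangle+\frac{L_f}{2}\|h\|^2$ for all $x,h$, and bounded below by $f^{\inf}\in\mathbb R$. *)

theory Defs
  imports "HOL-Probability.Probability"
begin

definition grad :: "('a::real_inner \<Rightarrow> real) \<Rightarrow> 'a \<Rightarrow> 'a" where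
  "grad F x = (THE g. GDERIV F x :> g)"

definition lambda_max :: "real^'n^'n \<Rightarrow> real" where
  "lambda_max M = Max {l. \<exists>v. v \<noteq> 0 \<and> M *v v = l *\<^sub>R v}"

definition fS :: "(real^'n \<Rightarrow> real) \<Rightarrow> real^'n \<Rightarrow> real^'n^'n \<Rightarrow> real^'n \<Rightarrow> real" where
  "fS f s S x = f (s + S *v (x - s))"

definition ftilde :: "(real^'n \<Rightarrow> real) \<Rightarrow> real^'n \<Rightarrow> (real^'n^'n) measure \<Rightarrow> real^'n \<Rightarrow> real" where
  "ftilde f s D x = (\<integral>S. fS f s S x \<partial>D)"

definition LSmax :: "(real^'n^'n) measure \<Rightarrow> real" where
  "LSmax D = Inf {L. AE S in D. lambda_max (transpose S ** S) \<le> L}"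

text \<open>Distribution of the iterate x^t of inexact Double Sketched SGD:
  x^{t+1} = x^t - gamma g_{S^t}(x^t), with S^t ~ D drawn afresh, and the
  estimator g_S(x) distributed according to G S x.\<close>
primrec dssgd_iter ::
  "(real^'n^'n) measure \<Rightarrow> (real^'n^'n \<Rightarrow> real^'n \<Rightarrow> (real^'n) measure) \<Rightarrow> real
     \<Rightarrow> real^'n \<Rightarrow> nat \<Rightarrow> (real^'n) measure" where
  "dssgd_iter D G \<gamma> x0 0 = return borel x0"
| "dssgd_iter D G \<gamma> x0 (Suc t) =
     dssgd_iter D G \<gamma> x0 t \<bind>
       (\<lambda>x. D \<bind> (\<lambda>S. G S x \<bind> (\<lambda>g. return borel (x - \<gamma> *\<^sub>R g))))"

definition dssgd_avg ::
  "(real^'n^'n) measure \<Rightarrow> (real^'n^'n \<Rightarrow> real^'n \<Rightarrow> (real^'n) measure) \<Rightarrow> real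
     \<Rightarrow> real^'n \<Rightarrow> nat \<Rightarrow> (real^'n) measure" where
  "dssgd_avg D G \<gamma> x0 T = measure_pmf (pmf_of_set {..<T}) \<bind> (\<lambda>t. dssgd_iter D G \<gamma> x0 t)"

end

theory Submission
  imports Defs
begin

text \<open>If \<open>\<lambda>\<^sub>m\<^sub>a\<^sub>x(S\<^sup>T S) \<le> L\<close>, then \<open>\<parallel>S h\<parallel>\<^sup>2 \<le> L \<parallel>h\<parallel>\<^sup>2\<close> (Rayleigh quotient), so the sketched
  function \<open>f\<^sub>S\<close> is convex and \<open>L\<^sub>f L\<close>-smooth; being bounded below by \<open>f\<^sup>i\<^sup>n\<^sup>f\<close>, it satisfies
  \<open>\<parallel>\<nabla>f\<^sub>S(x)\<parallel>\<^sup>2 \<le> 2 L\<^sub>f L (f\<^sub>S(x) - f\<^sup>i\<^sup>n\<^sup>f)\<close>. Expanding \<open>\<parallel>x - \<gamma> g - x\<^sup>\<star>\<parallel>\<^sup>2\<close> and using unbiasedness,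
  the ABC bound, this gradient bound and the convexity inequality
  \<open>f\<^sub>S(x) - f\<^sub>S(x\<^sup>\<star>) \<le> \<langle>\<nabla>f\<^sub>S(x), x - x\<^sup>\<star>\<rangle>\<close> gives, for a fixed sketch,
  \<open>E\<parallel>x\<^sup>+ - x\<^sup>\<star>\<parallel>\<^sup>2 \<le> \<parallel>x - x\<^sup>\<star>\<parallel>\<^sup>2 - 2\<gamma>(f\<^sub>S(x) - f\<^sub>S(x\<^sup>\<star>)) + \<gamma>\<^sup>2(2 D\<^sub>A\<^sub>B (f\<^sub>S(x) - f\<^sup>i\<^sup>n\<^sup>f) + C)\<close>.
  Averaging over \<open>S\<close> replaces \<open>f\<^sub>S\<close> by \<open>f\<^sup>~\<close>, and \<open>2\<gamma>D\<^sub>A\<^sub>B \<le> 1\<close> turns this into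
  \<open>E\<parallel>x\<^sup>+ - x\<^sup>\<star>\<parallel>\<^sup>2 + \<gamma>(f\<^sup>~(x) - f\<^sup>~\<^sup>i\<^sup>n\<^sup>f) \<le> \<parallel>x - x\<^sup>\<star>\<parallel>\<^sup>2 + \<gamma>\<^sup>2(2 D\<^sub>A\<^sub>B (f\<^sup>~\<^sup>i\<^sup>n\<^sup>f - f\<^sup>i\<^sup>n\<^sup>f) + C)\<close>.
  Telescoping over \<open>t < T\<close> and dividing by \<open>\<gamma> T\<close> bounds the average suboptimality, which is the
  expected suboptimality of the uniformly chosen iterate.\<close>

section \<open>Gradients of convex and smooth functions\<close>

lemma gderiv_unique:
  assumes "GDERIV f x :> a" "GDERIV f x :> b" shows "a = b"
proof -
  have "(\<lambda>h. h \<bullet> a) = (\<lambda>h. h \<bullet> b)"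
    using assms unfolding gderiv_def by (rule has_derivative_unique)
  then show ?thesis by (metis vector_eq_ldot)
qed

lemma grad_eqI:
  assumes "GDERIV f x :> g" shows "grad f x = g"
  unfolding grad_def using assms gderiv_unique by blast

lemma GDERIV_grad:
  fixes f :: "'a::euclidean_space \<Rightarrow> real"
  assumes "f differentiable (at x)" shows "GDERIV f x :> grad f x"
proof -
  obtain F where F: "(f has_derivative F) (at x)"
    using assms unfolding differentiable_def by blast
  have "F h = h \<bullet> adjoint F 1" for h
    using adjoint_works[OF has_derivative_linear[OF F]] by simp
  then have "GDERIV f x :> adjoint F 1"
    using F unfolding gderiv_def by (metis ext)
  then show ?thesis by (simp add: grad_eqI)
qed

lemma quadratic_nonneg_imp_linear_coeff_zero:
  fixes b c :: real
  assumes "\<And>t. 0 \<le> 2 * t * b + t\<^sup>2 * c"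
  shows "b = 0"
proof (rule ccontr)
  assume "b \<noteq> 0"
  define k where "k = \<bar>c\<bar> + 1"
  have k: "k > 0" "c - 2 * k < 0" unfolding k_def by auto
  have "2 * (- b / k) * b + (- b / k)\<^sup>2 * c = b\<^sup>2 * (c - 2 * k) / k\<^sup>2"
    using k by (simp add: field_simps power2_eq_square)
  also have "\<dots> < 0"
    using k \<open>b \<noteq> 0\<close> by (intro divide_neg_pos mult_pos_neg) auto
  finally show False using assms[of "- b / k"] by linarith
qed

lemma convex_on_compose_affine:
  fixes f :: "'b::real_vector \<Rightarrow> real" and L :: "'a::real_vector \<Rightarrow> 'b"
  assumes "convex_on UNIV f" "linear L"
  shows "convex_on UNIV (\<lambda>x. f (a + L x))"
proof (rule convex_onI)
  fix t :: real and u v :: 'a assume t: "0 < t" "t < 1"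
  have "L ((1 - t) *\<^sub>R u + t *\<^sub>R v) = (1 - t) *\<^sub>R L u + t *\<^sub>R L v"
    using \<open>linear L\<close> by (simp add: linear_add linear_scale)
  then have "a + L ((1 - t) *\<^sub>R u + t *\<^sub>R v) = (1 - t) *\<^sub>R (a + L u) + t *\<^sub>R (a + L v)"
    by (simp add: algebra_simps)
  then show "f (a + L ((1 - t) *\<^sub>R u + t *\<^sub>R v)) \<le> (1 - t) * f (a + L u) + t * f (a + L v)"
    using convex_onD[OF assms(1), of t] t by simp
qed simp

lemma convex_on_gradient_inequality:
  fixes h :: "'a::real_inner \<Rightarrow> real"
  assumes "convex_on UNIV h" and "GDERIV h x :> w"
  shows "h x + w \<bullet> (z - x) \<le> h z"
proof -
  define \<psi> where "\<psi> t = h (x + t *\<^sub>R (z - x))" for t :: real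
  have "convex_on UNIV \<psi>"
    unfolding \<psi>_def by (rule convex_on_compose_affine[OF assms(1)]) (simp add: linear_scale_left)
  moreover have "(\<psi> has_real_derivative ((z - x) \<bullet> w)) (at 0)"
  proof -
    have "((\<lambda>t::real. x + t *\<^sub>R (z - x)) has_derivative (\<lambda>t. t *\<^sub>R (z - x))) (at 0)"
      by (auto intro!: derivative_eq_intros)
    moreover have "(h has_derivative (\<lambda>v. v \<bullet> w)) (at (x + 0 *\<^sub>R (z - x)))"
      using assms(2) unfolding gderiv_def by simp
    ultimately have "(\<psi> has_derivative (\<lambda>t. (t *\<^sub>R (z - x)) \<bullet> w)) (at 0)"
      unfolding \<psi>_def by (rule has_derivative_compose)
    then show ?thesis
      unfolding has_field_derivative_def by (simp add: mult.commute[of _ "(z - x) \<bullet> w"])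
  qed
  ultimately have "((z - x) \<bullet> w) * (1 - 0) \<le> \<psi> 1 - \<psi> 0"
    by (intro convex_on_imp_above_tangent) auto
  then show ?thesis unfolding \<psi>_def by (simp add: inner_commute)
qed

lemma smooth_convex_const_nonneg:
  fixes f :: "'a::euclidean_space \<Rightarrow> real"
  assumes "convex_on UNIV f" "\<And>x. f differentiable (at x)"
    and "\<And>x h. f (x + h) \<le> f x + grad f x \<bullet> h + L / 2 * norm h ^ 2"
  shows "L \<ge> 0"
proof -
  obtain b :: 'a where "b \<in> Basis" using nonempty_Basis by blast
  moreover have "f 0 + grad f 0 \<bullet> (b - 0) \<le> f b"
    by (rule convex_on_gradient_inequality[OF assms(1) GDERIV_grad[OF assms(2)]])
  moreover have "f (0 + b) \<le> f 0 + grad f 0 \<bullet> b + L / 2 * norm b ^ 2" by (rule assms(3))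
  ultimately show ?thesis by simp
qed

text \<open>The descent lemma: a step \<open>-t d\<close> cannot go below the lower bound \<open>m\<close>; the
  optimal choice is \<open>t = 1 / K\<close>.\<close>
lemma smooth_bounded_below_grad_norm_sq_le:
  fixes g :: "'a::real_inner \<Rightarrow> real"
  assumes smooth: "\<And>h. g (x + h) \<le> g x + d \<bullet> h + K / 2 * norm h ^ 2"
    and K: "K \<ge> 0" and lower: "\<And>y. m \<le> g y"
  shows "norm d ^ 2 \<le> 2 * K * (g x - m)"
proof -
  have descent: "m \<le> g x - t * norm d ^ 2 + K / 2 * t\<^sup>2 * norm d ^ 2" for t
    using lower[of "x + (- t) *\<^sub>R d"] smooth[of "(- t) *\<^sub>R d"]
    by (simp add: power2_norm_eq_inner power_mult_distrib)
  show ?thesis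
  proof (cases "K = 0")
    case True
    have "d = 0"
    proof (rule ccontr)
      assume "d \<noteq> 0"
      then have "m \<le> g x - (g x - m + 1)"
        using descent[of "(g x - m + 1) / norm d ^ 2"] True by simp
      then show False by simp
    qed
    then show ?thesis using True by simp
  next
    case False
    then have "m \<le> g x - norm d ^ 2 / (2 * K)"
      using descent[of "1 / K"] K by (simp add: field_simps power2_eq_square)
    then show ?thesis using False K by (simp add: field_simps)
  qed
qed

section \<open>The largest eigenvalue of a Gram matrix\<close>

lemma inner_transpose_matrix_vector:
  fixes S :: "real^'n^'m"
  shows "a \<bullet> (transpose S *v b) = (S *v a) \<bullet> b"
  by (metis dot_lmul_matrix inner_commute transpose_matrix_vector)

lemma inner_symmetric_matrix_vector:
  fixes M :: "real^'n^'n"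
  assumes "transpose M = M"
  shows "(M *v a) \<bullet> b = a \<bullet> (M *v b)"
  by (metis assms inner_transpose_matrix_vector)

lemma finite_eigenvalues_symmetric:
  fixes M :: "real^'n^'n"
  assumes sym: "transpose M = M"
  shows "finite {l. \<exists>v. v \<noteq> 0 \<and> M *v v = l *\<^sub>R v}" (is "finite ?E")
proof -
  define vec where "vec l = (SOME v. v \<noteq> 0 \<and> M *v v = l *\<^sub>R v)" for l
  have vec: "vec l \<noteq> 0 \<and> M *v vec l = l *\<^sub>R vec l" if "l \<in> ?E" for l
    using that someI_ex[of "\<lambda>v. v \<noteq> 0 \<and> M *v v = l *\<^sub>R v"] unfolding vec_def by blast
  have orth: "vec l1 \<bullet> vec l2 = 0" if "l1 \<in> ?E" "l2 \<in> ?E" "l1 \<noteq> l2" for l1 l2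
  proof -
    have "l1 * (vec l1 \<bullet> vec l2) = (M *v vec l1) \<bullet> vec l2" using vec[OF that(1)] by simp
    also have "\<dots> = vec l1 \<bullet> (M *v vec l2)" by (rule inner_symmetric_matrix_vector[OF sym])
    also have "\<dots> = l2 * (vec l1 \<bullet> vec l2)" using vec[OF that(2)] by simp
    finally show ?thesis using that(3) by simp
  qed
  have "inj_on vec ?E"
  proof (rule inj_onI)
    fix a b assume ab: "a \<in> ?E" "b \<in> ?E" "vec a = vec b"
    show "a = b"
      using orth[OF ab(1,2)] vec[OF ab(1)] ab(3) by (cases "a = b") auto
  qed
  moreover have "pairwise orthogonal (vec ` ?E)"
    unfolding pairwise_def orthogonal_def using orth by fastforce
  then have "independent (vec ` ?E)"
    using vec by (intro pairwise_orthogonal_independent) fastforce+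
  then have "finite (vec ` ?E)" using independent_bound by blast
  ultimately show ?thesis using finite_imageD by blast
qed

lemma quadratic_form_scaleR:
  fixes M :: "real^'n^'n"
  shows "(c *\<^sub>R a) \<bullet> (M *v (c *\<^sub>R a)) = c\<^sup>2 * (a \<bullet> (M *v a))"
  by (simp add: matrix_vector_mult_scaleR power2_eq_square)

lemma quadratic_form_le_of_unit:
  fixes M :: "real^'n^'n"
  assumes "a \<noteq> 0" "(a /\<^sub>R norm a) \<bullet> (M *v (a /\<^sub>R norm a)) \<le> \<mu>"
  shows "a \<bullet> (M *v a) \<le> \<mu> * norm a ^ 2"
proof -
  have "(a /\<^sub>R norm a) \<bullet> (M *v (a /\<^sub>R norm a)) = (a \<bullet> (M *v a)) / norm a ^ 2"
    using quadratic_form_scaleR[of "inverse (norm a)" a M] by (simp add: power_inverse divide_inverse_commute)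
  then show ?thesis using assms by (simp add: divide_le_eq)
qed

text \<open>A maximiser of the quadratic form on the unit sphere is an eigenvector: the form
  \<open>B(a, c) = \<mu> (a \<bullet> c) - a \<bullet> M c\<close> is positive semidefinite and vanishes at \<open>(w, w)\<close>, so
  \<open>B(w, \<cdot>) = 0\<close>.\<close>
lemma symmetric_sphere_maximiser_eigenvector:
  fixes M :: "real^'n^'n"
  assumes sym: "transpose M = M" and w: "norm w = 1"
    and max: "\<And>y. norm y = 1 \<Longrightarrow> y \<bullet> (M *v y) \<le> w \<bullet> (M *v w)"
  defines "\<mu> \<equiv> w \<bullet> (M *v w)"
  shows "M *v w = \<mu> *\<^sub>R w"
proof -
  define B where "B a c = \<mu> * (a \<bullet> c) - a \<bullet> (M *v c)" for a c
  have B_nonneg: "0 \<le> B a a" for a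
  proof (cases "a = 0")
    case False
    have "(a /\<^sub>R norm a) \<bullet> (M *v (a /\<^sub>R norm a)) \<le> \<mu>"
      unfolding \<mu>_def using False by (intro max) simp
    then have "a \<bullet> (M *v a) \<le> \<mu> * norm a ^ 2"
      by (rule quadratic_form_le_of_unit[OF False])
    then show ?thesis unfolding B_def by (simp add: power2_norm_eq_inner)
  qed (simp add: B_def)
  define r where "r = \<mu> *\<^sub>R w - M *v w"
  have "B (w + t *\<^sub>R r) (w + t *\<^sub>R r) = 2 * t * B w r + t\<^sup>2 * B r r" for t
  proof -
    have "B w w = 0" using w unfolding B_def \<mu>_def by (simp add: power2_norm_eq_inner[symmetric])
    moreover have "B r w = B w r"
      unfolding B_def using inner_symmetric_matrix_vector[OF sym, of w r] by (simp add: inner_commute)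
    moreover have "B (w + t *\<^sub>R r) (w + t *\<^sub>R r) = B w w + t * B w r + t * B r w + t\<^sup>2 * B r r"
      unfolding B_def by (simp add: inner_add_left inner_add_right matrix_vector_right_distrib
          matrix_vector_mult_scaleR algebra_simps power2_eq_square)
    ultimately show ?thesis by simp
  qed
  then have "B w r = 0"
    using B_nonneg by (intro quadratic_nonneg_imp_linear_coeff_zero[of _ "B r r"]) metis
  moreover have "B w r = (\<mu> *\<^sub>R w - M *v w) \<bullet> r"
    unfolding B_def by (simp add: inner_diff_left inner_symmetric_matrix_vector[OF sym])
  ultimately show ?thesis unfolding r_def by simp
qed

lemma rayleigh_quotient_le_lambda_max:
  fixes M :: "real^'n^'n"
  assumes sym: "transpose M = M"
  shows "v \<bullet> (M *v v) \<le> lambda_max M * norm v ^ 2"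
proof -
  define q where "q y = y \<bullet> (M *v y)" for y
  have "continuous_on (sphere 0 1) q"
    unfolding q_def by (intro continuous_intros matrix_vector_mult_linear_continuous_on)
  moreover obtain b :: "real^'n" where "b \<in> Basis" using nonempty_Basis by blast
  then have "sphere (0::real^'n) 1 \<noteq> {}" by (auto intro!: exI[of _ b])
  ultimately obtain w where w: "w \<in> sphere 0 1" and max: "\<And>y. y \<in> sphere 0 1 \<Longrightarrow> q y \<le> q w"
    using continuous_attains_sup[OF compact_sphere] by blast
  have "M *v w = q w *\<^sub>R w"
    unfolding q_def using w max[unfolded q_def]
    by (intro symmetric_sphere_maximiser_eigenvector[OF sym]) simp_all
  moreover have "w \<noteq> 0" using w by auto
  ultimately have "q w \<in> {l. \<exists>v. v \<noteq> 0 \<and> M *v v = l *\<^sub>R v}" by blast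
  then have "q w \<le> lambda_max M"
    unfolding lambda_max_def by (rule Max_ge[OF finite_eigenvalues_symmetric[OF sym]])
  moreover have "q v \<le> q w * norm v ^ 2"
  proof (cases "v = 0")
    case False
    have "q (v /\<^sub>R norm v) \<le> q w" using False by (intro max) simp
    then show ?thesis
      unfolding q_def by (rule quadratic_form_le_of_unit[OF False])
  qed (simp add: q_def)
  ultimately have "q v \<le> lambda_max M * norm v ^ 2"
    using mult_right_mono[of "q w" "lambda_max M" "norm v ^ 2"] by simp
  then show ?thesis unfolding q_def .
qed

lemma norm_matrix_vector_sq_le_lambda_max:
  fixes S :: "real^'n^'n"
  shows "norm (S *v v) ^ 2 \<le> lambda_max (transpose S ** S) * norm v ^ 2"
proof -
  have "norm (S *v v) ^ 2 = v \<bullet> ((transpose S ** S) *v v)"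
    by (simp add: power2_norm_eq_inner inner_transpose_matrix_vector
        matrix_vector_mul_assoc[symmetric] del: transpose_matrix_vector)
  also have "\<dots> \<le> lambda_max (transpose S ** S) * norm v ^ 2"
    by (rule rayleigh_quotient_le_lambda_max) (simp add: matrix_transpose_mul)
  finally show ?thesis .
qed

lemma lambda_max_gram_nonneg:
  fixes S :: "real^'n^'n"
  shows "0 \<le> lambda_max (transpose S ** S)"
proof -
  obtain b :: "real^'n" where "b \<in> Basis" using nonempty_Basis by blast
  then have "norm (S *v b) ^ 2 \<le> lambda_max (transpose S ** S)"
    using norm_matrix_vector_sq_le_lambda_max[of S b] by simp
  then show ?thesis by (meson order_trans zero_le_power2)
qed

section \<open>Sketched functions\<close>

lemma GDERIV_fS:
  fixes S :: "real^'n^'n"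
  assumes "GDERIV f (s + S *v (x - s)) :> g"
  shows "GDERIV (fS f s S) x :> transpose S *v g"
proof -
  have "((\<lambda>z. S *v z + (s - S *v s)) has_derivative (\<lambda>h. S *v h)) (at x)"
    by (intro has_derivative_add_const bounded_linear_imp_has_derivative
        matrix_vector_mul_bounded_linear)
  then have "((\<lambda>z. s + S *v (z - s)) has_derivative (\<lambda>h. S *v h)) (at x)"
    by (simp add: matrix_vector_mult_diff_distrib algebra_simps)
  from has_derivative_compose[OF this] assms
  have "(fS f s S has_derivative (\<lambda>h. (S *v h) \<bullet> g)) (at x)"
    unfolding gderiv_def fS_def[abs_def] by blast
  moreover have "(\<lambda>h. (S *v h) \<bullet> g) = (\<lambda>h. h \<bullet> (transpose S *v g))"
    by (simp only: inner_transpose_matrix_vector)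
  ultimately show ?thesis
    unfolding gderiv_def by (simp only:)
qed

lemma grad_fS:
  fixes S :: "real^'n^'n"
  assumes "\<And>y. f differentiable (at y)"
  shows "grad (fS f s S) x = transpose S *v grad f (s + S *v (x - s))"
  by (rule grad_eqI[OF GDERIV_fS[OF GDERIV_grad[OF assms]]])

lemma convex_on_fS:
  fixes S :: "real^'n^'n"
  assumes "convex_on UNIV f"
  shows "convex_on UNIV (fS f s S)"
proof -
  have "fS f s S = (\<lambda>x. f ((s - S *v s) + S *v x))"
    by (auto simp: fS_def fun_eq_iff algebra_simps)
  then show ?thesis by (simp add: convex_on_compose_affine[OF assms])
qed

lemma smooth_fS:
  fixes S :: "real^'n^'n"
  assumes diff: "\<And>y. f differentiable (at y)"
    and smooth: "\<And>y h. f (y + h) \<le> f y + grad f y \<bullet> h + Lf / 2 * norm h ^ 2"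
    and Lf: "Lf \<ge> 0" and S: "\<And>h. norm (S *v h) ^ 2 \<le> L * norm h ^ 2"
  shows "fS f s S (x + h) \<le> fS f s S x + grad (fS f s S) x \<bullet> h + Lf * L / 2 * norm h ^ 2"
proof -
  define y where "y = s + S *v (x - s)"
  have "fS f s S (x + h) = f (y + S *v h)"
    unfolding fS_def y_def by (simp add: algebra_simps)
  also have "\<dots> \<le> f y + grad f y \<bullet> (S *v h) + Lf / 2 * norm (S *v h) ^ 2" by (rule smooth)
  also have "grad f y \<bullet> (S *v h) = grad (fS f s S) x \<bullet> h"
    unfolding grad_fS[OF diff] y_def by (metis inner_commute inner_transpose_matrix_vector)
  also have "Lf / 2 * norm (S *v h) ^ 2 \<le> Lf * L / 2 * norm h ^ 2"
    using mult_left_mono[OF S[of h], of "Lf / 2"] Lf by simp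
  finally show ?thesis unfolding fS_def y_def by simp
qed

lemma
  fixes D :: "(real^'n^'n) measure"
  assumes D: "prob_space D" and bounded: "\<exists>L. AE S in D. lambda_max (transpose S ** S) \<le> L"
  shows AE_lambda_max_le_LSmax: "AE S in D. lambda_max (transpose S ** S) \<le> LSmax D"
    and LSmax_nonneg: "0 \<le> LSmax D"
proof -
  define U where "U = {L. AE S in D. lambda_max (transpose S ** S) \<le> L}"
  have U_nonneg: "0 \<le> L" if "L \<in> U" for L
  proof -
    from that have "AE S in D. lambda_max (transpose S ** S) \<le> L" by (simp add: U_def)
    then have "AE S in D. 0 \<le> L"
      by (rule eventually_mono) (rule order_trans[OF lambda_max_gram_nonneg])
    then show ?thesis by (simp add: prob_space.AE_const[OF D])
  qed
  have "U \<noteq> {}" using bounded unfolding U_def by blast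
  then have "Inf U \<ge> 0" using U_nonneg by (intro cInf_greatest) auto
  have "AE S in D. lambda_max (transpose S ** S) \<le> Inf U + inverse (real (Suc n))" for n
  proof -
    obtain L where L: "L \<in> U" "L < Inf U + inverse (real (Suc n))"
      using cInf_lessD[OF \<open>U \<noteq> {}\<close>, of "Inf U + inverse (real (Suc n))"] by auto
    from L(1) have "AE S in D. lambda_max (transpose S ** S) \<le> L" by (simp add: U_def)
    then show ?thesis by (rule eventually_mono) (use L(2) in linarith)
  qed
  then have "AE S in D. \<forall>n. lambda_max (transpose S ** S) \<le> Inf U + inverse (real (Suc n))"
    by (simp add: AE_all_countable)
  then have "AE S in D. lambda_max (transpose S ** S) \<le> Inf U"
  proof (rule eventually_mono)
    fix S :: "real^'n^'n" assume le: "\<forall>n. lambda_max (transpose S ** S) \<le> Inf U + inverse (real (Suc n))"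
    show "lambda_max (transpose S ** S) \<le> Inf U"
    proof (rule field_le_epsilon)
      fix e :: real assume "0 < e"
      then obtain n where "0 < n" "inverse (real n) < e" using ex_inverse_of_nat_less by blast
      then show "lambda_max (transpose S ** S) \<le> Inf U + e"
        using le[rule_format, of "n - 1"] by simp
    qed
  qed
  moreover have LSmax: "LSmax D = Inf U" unfolding LSmax_def U_def ..
  ultimately show "AE S in D. lambda_max (transpose S ** S) \<le> LSmax D" by simp
  show "0 \<le> LSmax D" using \<open>Inf U \<ge> 0\<close> LSmax by simp
qed

section \<open>Nonnegative integrals\<close>

lemma nn_integral_norm_sq_gradient_step_le:
  fixes M :: "'a::euclidean_space measure"
  assumes M: "prob_space M" "sets M = sets borel"
    and mean: "integrable M (\<lambda>g. g)" "(\<integral>g. g \<partial>M) = w"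
    and second: "(\<integral>\<^sup>+g. ennreal (norm g ^ 2) \<partial>M) \<le> ennreal V" and "0 \<le> V"
  shows "(\<integral>\<^sup>+g. ennreal (norm (u - \<gamma> *\<^sub>R g) ^ 2) \<partial>M)
           \<le> ennreal (norm u ^ 2 - 2 * \<gamma> * (u \<bullet> w) + \<gamma>\<^sup>2 * V)"
    and "0 \<le> norm u ^ 2 - 2 * \<gamma> * (u \<bullet> w) + \<gamma>\<^sup>2 * V"
proof -
  interpret prob_space M by (rule M(1))
  have "(\<lambda>g::'a. norm g ^ 2) \<in> borel_measurable M"
    by (subst measurable_cong_sets[OF M(2) refl]) simp
  moreover have "(\<integral>\<^sup>+g. ennreal (norm (norm g ^ 2)) \<partial>M) < \<infinity>"
    using second by (simp add: order_le_less_trans)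
  ultimately have int_sq: "integrable M (\<lambda>g. norm g ^ 2)" by (rule integrableI_bounded)
  have "ennreal (\<integral>g. norm g ^ 2 \<partial>M) = (\<integral>\<^sup>+g. ennreal (norm g ^ 2) \<partial>M)"
    by (rule nn_integral_eq_integral[symmetric]) (auto intro: int_sq)
  with second have "ennreal (\<integral>g. norm g ^ 2 \<partial>M) \<le> ennreal V" by simp
  with \<open>0 \<le> V\<close> have moment: "(\<integral>g. norm g ^ 2 \<partial>M) \<le> V"
    by (simp add: ennreal_le_iff)
  have expand: "norm (u - \<gamma> *\<^sub>R g) ^ 2 = norm u ^ 2 - 2 * \<gamma> * (u \<bullet> g) + \<gamma>\<^sup>2 * norm g ^ 2" for g
    by (simp only: power2_norm_eq_inner)
      (simp add: inner_diff_left inner_diff_right inner_commute power2_eq_square algebra_simps)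
  have int_lin: "integrable M (\<lambda>g. 2 * \<gamma> * (u \<bullet> g))"
    using mean(1) by (intro integrable_mult_right integrable_inner_right)
  have int_expand: "integrable M (\<lambda>g. norm (u - \<gamma> *\<^sub>R g) ^ 2)"
    unfolding expand using int_lin int_sq by auto
  have "(\<integral>g. norm (u - \<gamma> *\<^sub>R g) ^ 2 \<partial>M) = norm u ^ 2 - 2 * \<gamma> * (u \<bullet> w) + \<gamma>\<^sup>2 * (\<integral>g. norm g ^ 2 \<partial>M)"
    unfolding expand using int_lin int_sq mean
    by (simp add: Bochner_Integration.integral_add Bochner_Integration.integral_diff
        integral_inner_right prob_space)
  also have "\<dots> \<le> norm u ^ 2 - 2 * \<gamma> * (u \<bullet> w) + \<gamma>\<^sup>2 * V"
    using moment by (simp add: mult_left_mono)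
  finally have le: "(\<integral>g. norm (u - \<gamma> *\<^sub>R g) ^ 2 \<partial>M) \<le> norm u ^ 2 - 2 * \<gamma> * (u \<bullet> w) + \<gamma>\<^sup>2 * V" .
  then show "(\<integral>\<^sup>+g. ennreal (norm (u - \<gamma> *\<^sub>R g) ^ 2) \<partial>M)
           \<le> ennreal (norm u ^ 2 - 2 * \<gamma> * (u \<bullet> w) + \<gamma>\<^sup>2 * V)"
    by (auto simp: nn_integral_eq_integral[OF int_expand] intro: ennreal_leI)
  have "0 \<le> (\<integral>g. norm (u - \<gamma> *\<^sub>R g) ^ 2 \<partial>M)" by (rule integral_nonneg_AE) simp
  with le show "0 \<le> norm u ^ 2 - 2 * \<gamma> * (u \<bullet> w) + \<gamma>\<^sup>2 * V" by linarith
qed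

lemma ennreal_telescoping_le:
  fixes r a :: "nat \<Rightarrow> ennreal"
  assumes step: "\<And>t. r (Suc t) + a t \<le> r t + e"
  shows "r n + (\<Sum>t<n. a t) \<le> r 0 + of_nat n * e"
proof (induction n)
  case (Suc n)
  have "r (Suc n) + (\<Sum>t<Suc n. a t) = (r (Suc n) + a n) + (\<Sum>t<n. a t)"
    by (simp add: algebra_simps)
  also have "\<dots> \<le> (r n + e) + (\<Sum>t<n. a t)"
    by (rule add_right_mono[OF step])
  also have "\<dots> = (r n + (\<Sum>t<n. a t)) + e"
    by (simp add: ac_simps)
  also have "\<dots> \<le> (r 0 + of_nat n * e) + e"
    by (rule add_right_mono[OF Suc.IH])
  also have "\<dots> = r 0 + of_nat (Suc n) * e"
    by (simp add: distrib_left distrib_right ac_simps)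
  finally show ?case .
qed simp

lemma ennreal_divide_le_of_mult_le:
  fixes x :: ennreal
  assumes "0 < c" "0 < n" "0 \<le> R" "ennreal c * x \<le> ennreal R"
  shows "x / of_nat n \<le> ennreal (R / (c * real n))"
proof -
  have "x \<noteq> \<infinity>" using assms(1,4) by (auto simp: ennreal_mult_top top_unique)
  then obtain \<sigma> where \<sigma>: "x = ennreal \<sigma>" "0 \<le> \<sigma>" by (cases x rule: ennreal_cases) auto
  with assms have "c * \<sigma> \<le> R" by (simp add: ennreal_mult[symmetric] ennreal_le_iff)
  then have "\<sigma> / real n \<le> R / (c * real n)" using assms by (simp add: field_simps)
  then show ?thesis
    using \<sigma> assms by (simp add: ennreal_of_nat_eq_real_of_nat divide_ennreal ennreal_leI)
qed

section \<open>Inexact double sketched SGD\<close>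

locale dssgd_setting =
  fixes f :: "real^'n \<Rightarrow> real"
    and s xstar :: "real^'n"
    and D :: "(real^'n^'n) measure"
    and G :: "real^'n^'n \<Rightarrow> real^'n \<Rightarrow> (real^'n) measure"
    and Lf A B C \<gamma> :: real
  assumes D_prob: "prob_space D"
    and D_sets: "sets D = sets borel"
    and LSmax_finite: "\<exists>L. AE S in D. lambda_max (transpose S ** S) \<le> L"
    and f_convex: "convex_on UNIV f"
    and f_diff: "\<And>x. f differentiable (at x)"
    and f_smooth: "\<And>x h. f (x + h) \<le> f x + grad f x \<bullet> h + Lf / 2 * norm h ^ 2"
    and f_bdd: "bdd_below (range f)"
    and xstar_min: "\<And>x. ftilde f s D xstar \<le> ftilde f s D x"
    and G_prob: "\<And>S x. prob_space (G S x)"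
    and G_sets: "\<And>S x. sets (G S x) = sets borel"
    and G_meas: "(\<lambda>(S, x). G S x) \<in> borel \<Otimes>\<^sub>M borel \<rightarrow>\<^sub>M subprob_algebra borel"
    and ABC_unbiased: "\<And>S x. integrable (G S x) (\<lambda>g. g) \<and>
                          (\<integral>g. g \<partial>G S x) = grad (fS f s S) x"
    and ABC_second: "\<And>S x. (\<integral>\<^sup>+g. ennreal (norm g ^ 2) \<partial>G S x)
          \<le> ennreal (2 * A * (fS f s S x - (INF y. fS f s S y))
                     + B * norm (grad (fS f s S) x) ^ 2 + C)"
    and A_nonneg: "A \<ge> 0" and B_nonneg: "B \<ge> 0" and C_nonneg: "C \<ge> 0"
    and gamma_pos: "\<gamma> > 0"
    and gamma_le: "2 * \<gamma> * (A + B * Lf * LSmax D) \<le> 1"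
begin

definition finf :: real where "finf = (INF y. f y)"

definition D_AB :: real where "D_AB = A + B * Lf * LSmax D"

definition step_kernel :: "real^'n \<Rightarrow> (real^'n) measure" where
  "step_kernel x = D \<bind> (\<lambda>S. G S x \<bind> (\<lambda>g. return borel (x - \<gamma> *\<^sub>R g)))"

lemma f_lower: "finf \<le> f y"
  unfolding finf_def using f_bdd by (rule cINF_lower) simp

lemma finf_le_INF_fS: "finf \<le> (INF y. fS f s S y)"
  by (rule cINF_greatest) (auto simp: fS_def f_lower)

lemma INF_fS_le: "(INF y. fS f s S y) \<le> fS f s S x"
  by (rule cINF_lower) (auto intro!: bdd_belowI[of _ finf] simp: fS_def f_lower)

lemma Lf_nonneg: "Lf \<ge> 0"
  by (rule smooth_convex_const_nonneg[OF f_convex f_diff f_smooth])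

lemma LSmax_D_nonneg: "LSmax D \<ge> 0"
  by (rule LSmax_nonneg[OF D_prob LSmax_finite])

lemma D_AB_nonneg: "D_AB \<ge> 0"
  unfolding D_AB_def using A_nonneg B_nonneg Lf_nonneg LSmax_D_nonneg by simp

lemma AE_norm_sketch_le: "AE S in D. \<forall>h. norm (S *v h) ^ 2 \<le> LSmax D * norm h ^ 2"
  using AE_lambda_max_le_LSmax[OF D_prob LSmax_finite]
proof (rule eventually_mono)
  fix S :: "real^'n^'n" assume "lambda_max (transpose S ** S) \<le> LSmax D"
  then show "\<forall>h. norm (S *v h) ^ 2 \<le> LSmax D * norm h ^ 2"
    using norm_matrix_vector_sq_le_lambda_max[of S]
    by (meson mult_right_mono order_trans zero_le_power2)
qed

lemma fS_upper:
  assumes S: "\<forall>h. norm (S *v h) ^ 2 \<le> LSmax D * norm h ^ 2"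
  shows "fS f s S x \<le> f s + norm (grad f s) ^ 2 / 2 + (1 + Lf) / 2 * (LSmax D * norm (x - s) ^ 2)"
proof -
  define h where "h = S *v (x - s)"
  have "fS f s S x \<le> f s + grad f s \<bullet> h + Lf / 2 * norm h ^ 2"
    unfolding fS_def h_def by (rule f_smooth)
  also have "grad f s \<bullet> h \<le> norm (grad f s) ^ 2 / 2 + norm h ^ 2 / 2"
    using norm_cauchy_schwarz[of "grad f s" h] sum_squares_bound[of "norm (grad f s)" "norm h"]
    by linarith
  finally have "fS f s S x \<le> f s + norm (grad f s) ^ 2 / 2 + (1 + Lf) / 2 * norm h ^ 2"
    by (simp add: algebra_simps add_divide_distrib)
  also have "(1 + Lf) / 2 * norm h ^ 2 \<le> (1 + Lf) / 2 * (LSmax D * norm (x - s) ^ 2)"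
    unfolding h_def using S Lf_nonneg by (intro mult_left_mono) auto
  finally show ?thesis by simp
qed

lemma continuous_on_f: "continuous_on UNIV f"
  using f_diff by (simp add: continuous_at_imp_continuous_on differentiable_imp_continuous_within)

lemma fS_measurable: "(\<lambda>S. fS f s S x) \<in> borel_measurable D"
proof -
  have "continuous_on UNIV (\<lambda>S::real^'n^'n. f (s + S *v (x - s)))"
    unfolding matrix_vector_mult_def
    by (rule continuous_on_compose2[OF continuous_on_f])
      (auto intro!: continuous_intros continuous_on_vec_lambda)
  then have "(\<lambda>S. fS f s S x) \<in> borel_measurable borel"
    unfolding fS_def by (rule borel_measurable_continuous_onI)
  then show ?thesis by (subst measurable_cong_sets[OF D_sets refl])
qed

lemma fS_integrable: "integrable D (\<lambda>S. fS f s S x)"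
proof -
  interpret D: prob_space D by (rule D_prob)
  define c where "c = \<bar>finf\<bar> + \<bar>f s + norm (grad f s) ^ 2 / 2 + (1 + Lf) / 2 * (LSmax D * norm (x - s) ^ 2)\<bar>"
  have "AE S in D. norm (fS f s S x) \<le> c"
    using AE_norm_sketch_le
  proof (rule eventually_mono)
    fix S :: "real^'n^'n" assume "\<forall>h. norm (S *v h) ^ 2 \<le> LSmax D * norm h ^ 2"
    then have "fS f s S x \<le> f s + norm (grad f s) ^ 2 / 2 + (1 + Lf) / 2 * (LSmax D * norm (x - s) ^ 2)"
      by (rule fS_upper)
    moreover have "finf \<le> fS f s S x" unfolding fS_def by (rule f_lower)
    ultimately show "norm (fS f s S x) \<le> c" unfolding c_def real_norm_def by linarith
  qed
  then show ?thesis by (intro D.integrable_const_bound fS_measurable)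
qed

lemma ftilde_lower: "finf \<le> ftilde f s D x"
proof -
  interpret D: prob_space D by (rule D_prob)
  show ?thesis unfolding ftilde_def
    by (rule D.integral_ge_const[OF fS_integrable]) (simp add: fS_def f_lower)
qed

lemma INF_ftilde: "(INF y. ftilde f s D y) = ftilde f s D xstar"
  by (rule cInf_eq_minimum) (auto intro: xstar_min)

lemma ftilde_measurable: "ftilde f s D \<in> borel_measurable borel"
proof -
  interpret D: prob_space D by (rule D_prob)
  have "continuous_on UNIV (\<lambda>p::(real^'n) \<times> (real^'n^'n). f (s + snd p *v (fst p - s)))"
    unfolding matrix_vector_mult_def
    by (rule continuous_on_compose2[OF continuous_on_f])
      (auto intro!: continuous_intros continuous_on_vec_lambda)
  then have "(\<lambda>p::(real^'n) \<times> (real^'n^'n). f (s + snd p *v (fst p - s))) \<in> borel_measurable (borel \<Otimes>\<^sub>M D)"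
    by (subst measurable_cong_sets[OF sets_pair_measure_cong[OF refl D_sets] refl])
      (simp add: borel_prod borel_measurable_continuous_onI)
  then have "(\<lambda>x. \<integral>S. f (s + S *v (x - s)) \<partial>D) \<in> borel_measurable borel"
    by (intro D.borel_measurable_lebesgue_integral) (simp add: case_prod_beta')
  then show ?thesis unfolding ftilde_def fS_def by simp
qed

lemma G_measurable_prob_algebra: "(\<lambda>(S, x). G S x) \<in> borel \<Otimes>\<^sub>M borel \<rightarrow>\<^sub>M prob_algebra borel"
  by (rule measurable_prob_algebraI) (auto simp: G_prob G_meas split: prod.splits)

lemma G_at_measurable: "(\<lambda>S. G S x) \<in> D \<rightarrow>\<^sub>M prob_algebra borel"
proof -
  have "(\<lambda>S. (S, x)) \<in> (borel::(real^'n^'n) measure) \<rightarrow>\<^sub>M borel \<Otimes>\<^sub>M (borel::(real^'n) measure)"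
    by measurable
  from measurable_compose[OF this G_measurable_prob_algebra]
  show ?thesis by (subst measurable_cong_sets[OF D_sets refl]) simp
qed

lemma step_kernel_measurable: "step_kernel \<in> borel \<rightarrow>\<^sub>M prob_algebra borel"
proof -
  have "(\<lambda>p. (snd p, fst p)) \<in> (borel::(real^'n) measure) \<Otimes>\<^sub>M (borel::(real^'n^'n) measure) \<rightarrow>\<^sub>M borel \<Otimes>\<^sub>M borel"
    by measurable
  from measurable_compose[OF this G_measurable_prob_algebra]
  have G: "(\<lambda>p. G (snd p) (fst p)) \<in> borel \<Otimes>\<^sub>M borel \<rightarrow>\<^sub>M prob_algebra borel" by simp
  have "(\<lambda>p. return borel (fst (fst p) - \<gamma> *\<^sub>R snd p))
     \<in> ((borel::(real^'n) measure) \<Otimes>\<^sub>M (borel::(real^'n^'n) measure)) \<Otimes>\<^sub>M (borel::(real^'n) measure) \<rightarrow>\<^sub>M prob_algebra borel"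
    by measurable
  then have "(\<lambda>p. G (snd p) (fst p) \<bind> (\<lambda>g. return borel (fst p - \<gamma> *\<^sub>R g)))
      \<in> (borel::(real^'n) measure) \<Otimes>\<^sub>M (borel::(real^'n^'n) measure) \<rightarrow>\<^sub>M prob_algebra borel"
    by (intro measurable_bind_prob_space2[OF G]) (simp add: case_prod_beta')
  moreover have "D \<in> space (prob_algebra borel)"
    using D_prob D_sets by (simp add: space_prob_algebra)
  ultimately show ?thesis
    unfolding step_kernel_def[abs_def]
    by (intro measurable_bind_prob_space2[OF measurable_const]) (simp_all add: case_prod_beta')
qed

lemma dssgd_iter_Suc: "dssgd_iter D G \<gamma> x0 (Suc t) = dssgd_iter D G \<gamma> x0 t \<bind> step_kernel"
  by (simp add: step_kernel_def[abs_def])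

lemma dssgd_iter_prob_algebra: "dssgd_iter D G \<gamma> x0 t \<in> space (prob_algebra borel)"
proof (induction t)
  case (Suc t)
  show ?case unfolding dssgd_iter_Suc space_prob_algebra
    using prob_space_bind'[OF Suc step_kernel_measurable] sets_bind'[OF Suc step_kernel_measurable]
    by simp
qed (simp add: space_prob_algebra prob_space_return)

lemma sketch_grad_norm_sq_le:
  assumes S: "\<forall>h. norm (S *v h) ^ 2 \<le> LSmax D * norm h ^ 2"
  shows "norm (grad (fS f s S) x) ^ 2 \<le> 2 * (Lf * LSmax D) * (fS f s S x - finf)"
  using smooth_fS[OF f_diff f_smooth Lf_nonneg] S
  by (intro smooth_bounded_below_grad_norm_sq_le)
    (auto simp: fS_def f_lower mult_nonneg_nonneg Lf_nonneg LSmax_D_nonneg)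

definition sketched_step_bound :: "real^'n \<Rightarrow> real^'n^'n \<Rightarrow> real" where
  "sketched_step_bound x S = norm (x - xstar) ^ 2 - 2 * \<gamma> * (fS f s S x - fS f s S xstar)
     + \<gamma>\<^sup>2 * (2 * D_AB * (fS f s S x - finf) + C)"

lemma sketched_step_le:
  assumes S: "\<forall>h. norm (S *v h) ^ 2 \<le> LSmax D * norm h ^ 2"
  shows "(\<integral>\<^sup>+g. ennreal (norm (x - \<gamma> *\<^sub>R g - xstar) ^ 2) \<partial>G S x) \<le> ennreal (sketched_step_bound x S)"
    and "0 \<le> sketched_step_bound x S"
proof -
  define w where "w = grad (fS f s S) x"
  define V where "V = 2 * A * (fS f s S x - (INF y. fS f s S y)) + B * norm w ^ 2 + C"
  have "0 \<le> V"
    unfolding V_def using A_nonneg B_nonneg C_nonneg INF_fS_le[of S x] by simp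
  note step = nn_integral_norm_sq_gradient_step_le[OF G_prob G_sets ABC_unbiased[THEN conjunct1]
      ABC_unbiased[THEN conjunct2] ABC_second[of S x, folded w_def, folded V_def] \<open>0 \<le> V\<close>, of "x - xstar" \<gamma>]
  have "GDERIV (fS f s S) x :> w"
    unfolding w_def grad_fS[OF f_diff] by (rule GDERIV_fS[OF GDERIV_grad[OF f_diff]])
  then have "fS f s S x + w \<bullet> (xstar - x) \<le> fS f s S xstar"
    by (rule convex_on_gradient_inequality[OF convex_on_fS[OF f_convex]])
  then have "fS f s S x - fS f s S xstar \<le> (x - xstar) \<bullet> w"
    by (simp add: inner_diff_left inner_diff_right inner_commute)
  moreover have "V \<le> 2 * D_AB * (fS f s S x - finf) + C"
  proof -
    have "2 * A * (fS f s S x - (INF y. fS f s S y)) \<le> 2 * A * (fS f s S x - finf)"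
      using A_nonneg finf_le_INF_fS[of S] by (simp add: mult_left_mono)
    moreover have "B * norm w ^ 2 \<le> B * (2 * (Lf * LSmax D) * (fS f s S x - finf))"
      unfolding w_def using B_nonneg sketch_grad_norm_sq_le[OF S] by (rule mult_left_mono[rotated])
    ultimately show ?thesis unfolding V_def D_AB_def by (simp add: algebra_simps)
  qed
  ultimately have "norm (x - xstar) ^ 2 - 2 * \<gamma> * ((x - xstar) \<bullet> w) + \<gamma>\<^sup>2 * V \<le> sketched_step_bound x S"
    unfolding sketched_step_bound_def using gamma_pos
    by (intro add_mono diff_mono mult_left_mono order_refl) auto
  then show "(\<integral>\<^sup>+g. ennreal (norm (x - \<gamma> *\<^sub>R g - xstar) ^ 2) \<partial>G S x) \<le> ennreal (sketched_step_bound x S)"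
    and "0 \<le> sketched_step_bound x S"
    using step by (simp_all add: w_def algebra_simps order_trans[OF _ ennreal_leI])
qed

lemma
  shows integrable_sketched_step_bound: "integrable D (sketched_step_bound x)"
    and integral_sketched_step_bound: "(\<integral>S. sketched_step_bound x S \<partial>D)
      = norm (x - xstar) ^ 2 - 2 * \<gamma> * (ftilde f s D x - ftilde f s D xstar)
        + \<gamma>\<^sup>2 * (2 * D_AB * (ftilde f s D x - finf) + C)"
proof -
  interpret D: prob_space D by (rule D_prob)
  define c where "c = norm (x - xstar) ^ 2 + \<gamma>\<^sup>2 * (C - 2 * D_AB * finf)"
  have eq: "sketched_step_bound x
      = (\<lambda>S. c + ((2 * \<gamma>\<^sup>2 * D_AB - 2 * \<gamma>) * fS f s S x + 2 * \<gamma> * fS f s S xstar))"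
    unfolding sketched_step_bound_def c_def by (auto simp: fun_eq_iff algebra_simps)
  have int_x: "integrable D (\<lambda>S. (2 * \<gamma>\<^sup>2 * D_AB - 2 * \<gamma>) * fS f s S x)"
    and int_xstar: "integrable D (\<lambda>S. 2 * \<gamma> * fS f s S xstar)"
    by (intro integrable_mult_right fS_integrable)+
  show "integrable D (sketched_step_bound x)"
    unfolding eq using int_x int_xstar by auto
  have "(\<integral>S. sketched_step_bound x S \<partial>D)
      = c + ((2 * \<gamma>\<^sup>2 * D_AB - 2 * \<gamma>) * ftilde f s D x + 2 * \<gamma> * ftilde f s D xstar)"
    unfolding eq ftilde_def using int_x int_xstar
    by (simp add: Bochner_Integration.integral_add D.prob_space)
  then show "(\<integral>S. sketched_step_bound x S \<partial>D)
      = norm (x - xstar) ^ 2 - 2 * \<gamma> * (ftilde f s D x - ftilde f s D xstar)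
        + \<gamma>\<^sup>2 * (2 * D_AB * (ftilde f s D x - finf) + C)"
    unfolding c_def by (simp add: algebra_simps)
qed

lemma nn_integral_step_kernel:
  "(\<integral>\<^sup>+y. ennreal (norm (y - xstar) ^ 2) \<partial>step_kernel x)
    = (\<integral>\<^sup>+S. (\<integral>\<^sup>+g. ennreal (norm (x - \<gamma> *\<^sub>R g - xstar) ^ 2) \<partial>G S x) \<partial>D)"
proof -
  have h: "(\<lambda>y. ennreal (norm (y - xstar) ^ 2)) \<in> borel_measurable (borel :: (real^'n) measure)"
    by measurable
  have R: "(\<lambda>g. return borel (x - \<gamma> *\<^sub>R g)) \<in> (borel :: (real^'n) measure) \<rightarrow>\<^sub>M prob_algebra borel"
    by measurable
  have "(\<lambda>S. G S x \<bind> (\<lambda>g. return borel (x - \<gamma> *\<^sub>R g))) \<in> D \<rightarrow>\<^sub>M prob_algebra borel"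
    by (rule measurable_bind_prob_space[OF G_at_measurable R])
  moreover have "(\<integral>\<^sup>+y. ennreal (norm (y - xstar) ^ 2) \<partial>(G S x \<bind> (\<lambda>g. return borel (x - \<gamma> *\<^sub>R g))))
      = (\<integral>\<^sup>+g. ennreal (norm (x - \<gamma> *\<^sub>R g - xstar) ^ 2) \<partial>G S x)" for S
  proof -
    have "(\<lambda>g. return borel (x - \<gamma> *\<^sub>R g)) \<in> G S x \<rightarrow>\<^sub>M subprob_algebra borel"
      using measurable_prob_algebraD[OF R] by (subst measurable_cong_sets[OF G_sets refl])
    then show ?thesis by (simp add: nn_integral_bind[OF h] nn_integral_return[OF _ h])
  qed
  ultimately show ?thesis
    unfolding step_kernel_def by (simp add: nn_integral_bind[OF h measurable_prob_algebraD])
qed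

text \<open>The step-size condition \<open>2 \<gamma> D_AB \<le> 1\<close> absorbs the \<open>\<gamma>\<^sup>2\<close>-term in the suboptimality
  \<open>ftilde x - ftilde xstar\<close> into half of the \<open>-2 \<gamma>\<close> descent term.\<close>
lemma one_step_descent:
  "(\<integral>\<^sup>+y. ennreal (norm (y - xstar) ^ 2) \<partial>step_kernel x) + ennreal (\<gamma> * (ftilde f s D x - ftilde f s D xstar))
    \<le> ennreal (norm (x - xstar) ^ 2) + ennreal (\<gamma>\<^sup>2 * (2 * D_AB * (ftilde f s D xstar - finf) + C))"
proof -
  define I where "I = (\<integral>S. sketched_step_bound x S \<partial>D)"
  define d where "d = ftilde f s D x - ftilde f s D xstar"
  define e where "e = \<gamma>\<^sup>2 * (2 * D_AB * (ftilde f s D xstar - finf) + C)"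
  have AE_bound: "AE S in D. (\<integral>\<^sup>+g. ennreal (norm (x - \<gamma> *\<^sub>R g - xstar) ^ 2) \<partial>G S x)
      \<le> ennreal (sketched_step_bound x S) \<and> 0 \<le> sketched_step_bound x S"
    using AE_norm_sketch_le by (rule eventually_mono) (intro conjI sketched_step_le)
  have "(\<integral>\<^sup>+y. ennreal (norm (y - xstar) ^ 2) \<partial>step_kernel x) \<le> (\<integral>\<^sup>+S. ennreal (sketched_step_bound x S) \<partial>D)"
    unfolding nn_integral_step_kernel using AE_bound
    by (intro nn_integral_mono_AE) (auto elim: eventually_mono)
  also have "\<dots> = ennreal I" unfolding I_def using integrable_sketched_step_bound AE_bound
    by (intro nn_integral_eq_integral) (auto elim: eventually_mono)
  finally have "(\<integral>\<^sup>+y. ennreal (norm (y - xstar) ^ 2) \<partial>step_kernel x) + ennreal (\<gamma> * d)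
      \<le> ennreal I + ennreal (\<gamma> * d)" by (rule add_right_mono)
  also have "\<dots> \<le> ennreal (norm (x - xstar) ^ 2) + ennreal e"
  proof -
    have "0 \<le> d" unfolding d_def using xstar_min[of x] by simp
    moreover have "0 \<le> e" unfolding e_def using D_AB_nonneg ftilde_lower[of xstar] C_nonneg by simp
    moreover have "0 \<le> I" unfolding I_def using AE_bound by (intro integral_nonneg_AE) (auto elim: eventually_mono)
    moreover have "2 * \<gamma> * D_AB * (\<gamma> * d) \<le> \<gamma> * d"
      using gamma_le[folded D_AB_def] \<open>0 \<le> d\<close> gamma_pos D_AB_nonneg by (intro mult_left_le_one_le) auto
    moreover have "I = norm (x - xstar) ^ 2 - 2 * \<gamma> * d + 2 * \<gamma> * D_AB * (\<gamma> * d) + e"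
      unfolding I_def integral_sketched_step_bound d_def e_def by (simp add: algebra_simps power2_eq_square)
    ultimately have "I + \<gamma> * d \<le> norm (x - xstar) ^ 2 + e" by linarith
    have "ennreal I + ennreal (\<gamma> * d) = ennreal (I + \<gamma> * d)"
      using \<open>0 \<le> I\<close> \<open>0 \<le> d\<close> gamma_pos by (simp add: ennreal_plus)
    also have "\<dots> \<le> ennreal (norm (x - xstar) ^ 2 + e)" by (rule ennreal_leI) fact
    also have "\<dots> = ennreal (norm (x - xstar) ^ 2) + ennreal e"
      using \<open>0 \<le> e\<close> by (simp add: ennreal_plus)
    finally show ?thesis .
  qed
  finally show ?thesis unfolding d_def e_def .
qed

lemma iterate_descent:
  "(\<integral>\<^sup>+y. ennreal (norm (y - xstar) ^ 2) \<partial>dssgd_iter D G \<gamma> x0 (Suc t))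
     + ennreal \<gamma> * (\<integral>\<^sup>+x. ennreal (ftilde f s D x - (INF y. ftilde f s D y)) \<partial>dssgd_iter D G \<gamma> x0 t)
   \<le> (\<integral>\<^sup>+y. ennreal (norm (y - xstar) ^ 2) \<partial>dssgd_iter D G \<gamma> x0 t)
     + ennreal (\<gamma>\<^sup>2 * (2 * D_AB * (ftilde f s D xstar - finf) + C))"
proof -
  define M where "M = dssgd_iter D G \<gamma> x0 t"
  define e where "e = \<gamma>\<^sup>2 * (2 * D_AB * (ftilde f s D xstar - finf) + C)"
  interpret M: prob_space M
    using dssgd_iter_prob_algebra unfolding M_def by (simp add: space_prob_algebra)
  have M_sets: "sets M = sets borel"
    using dssgd_iter_prob_algebra unfolding M_def by (simp add: space_prob_algebra)
  have dist: "(\<lambda>y. ennreal (norm (y - xstar) ^ 2)) \<in> borel_measurable (borel :: (real^'n) measure)"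
    by measurable
  have K: "step_kernel \<in> M \<rightarrow>\<^sub>M subprob_algebra borel"
    using measurable_prob_algebraD[OF step_kernel_measurable]
    by (subst measurable_cong_sets[OF M_sets refl])
  have subopt: "(\<lambda>x. ftilde f s D x - ftilde f s D xstar) \<in> borel_measurable M"
    by (subst measurable_cong_sets[OF M_sets refl]) (use ftilde_measurable in measurable)
  have "(\<integral>\<^sup>+y. ennreal (norm (y - xstar) ^ 2) \<partial>dssgd_iter D G \<gamma> x0 (Suc t))
      = (\<integral>\<^sup>+x. (\<integral>\<^sup>+y. ennreal (norm (y - xstar) ^ 2) \<partial>step_kernel x) \<partial>M)"
    unfolding dssgd_iter_Suc M_def[symmetric] by (rule nn_integral_bind[OF dist K])
  moreover have "ennreal \<gamma> * (\<integral>\<^sup>+x. ennreal (ftilde f s D x - (INF y. ftilde f s D y)) \<partial>M)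
      = (\<integral>\<^sup>+x. ennreal (\<gamma> * (ftilde f s D x - ftilde f s D xstar)) \<partial>M)"
    unfolding INF_ftilde using subopt gamma_pos xstar_min
    by (subst nn_integral_cmult[symmetric]) (auto intro!: nn_integral_cong simp: ennreal_mult)
  ultimately have "(\<integral>\<^sup>+y. ennreal (norm (y - xstar) ^ 2) \<partial>dssgd_iter D G \<gamma> x0 (Suc t))
      + ennreal \<gamma> * (\<integral>\<^sup>+x. ennreal (ftilde f s D x - (INF y. ftilde f s D y)) \<partial>M)
      = (\<integral>\<^sup>+x. (\<integral>\<^sup>+y. ennreal (norm (y - xstar) ^ 2) \<partial>step_kernel x)
           + ennreal (\<gamma> * (ftilde f s D x - ftilde f s D xstar)) \<partial>M)"
    using measurable_compose[OF K nn_integral_measurable_subprob_algebra[OF dist]] subopt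
    by (subst nn_integral_add) (simp_all add: o_def)
  also have "\<dots> \<le> (\<integral>\<^sup>+x. ennreal (norm (x - xstar) ^ 2) + ennreal e \<partial>M)"
    unfolding e_def by (intro nn_integral_mono one_step_descent)
  also have "\<dots> = (\<integral>\<^sup>+x. ennreal (norm (x - xstar) ^ 2) \<partial>M) + ennreal e"
    using dist by (subst nn_integral_add) (simp_all add: measurable_cong_sets[OF M_sets refl] M.emeasure_space_1)
  finally show ?thesis unfolding M_def e_def .
qed

lemma nn_integral_dssgd_avg:
  assumes "T \<ge> 1" and h: "h \<in> borel_measurable borel"
  shows "(\<integral>\<^sup>+x. h x \<partial>dssgd_avg D G \<gamma> x0 T) = (\<Sum>t<T. \<integral>\<^sup>+x. h x \<partial>dssgd_iter D G \<gamma> x0 t) / of_nat T"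
proof -
  have "(\<lambda>t. dssgd_iter D G \<gamma> x0 t) \<in> measure_pmf (pmf_of_set {..<T}) \<rightarrow>\<^sub>M subprob_algebra borel"
    using dssgd_iter_prob_algebra[of x0]
    by (auto simp: measurable_pmf_measure1 space_prob_algebra space_subprob_algebra
        intro: prob_space_imp_subprob_space)
  moreover have "{..<T} \<noteq> {}" using assms(1) by (auto simp: lessThan_empty_iff)
  ultimately show ?thesis
    unfolding dssgd_avg_def by (simp add: nn_integral_bind[OF h] nn_integral_pmf_of_set)
qed

lemma expected_suboptimality_of_average_le:
  assumes T: "T \<ge> 1"
  shows "(\<integral>\<^sup>+x. ennreal (ftilde f s D x - (INF y. ftilde f s D y)) \<partial>dssgd_avg D G \<gamma> x0 T)
     \<le> ennreal (norm (x0 - xstar) ^ 2 / (\<gamma> * real T)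
          + \<gamma> * (2 * ((INF y. ftilde f s D y) - (INF y. f y)) * (A + B * Lf * LSmax D) + C))"
proof -
  define e where "e = \<gamma>\<^sup>2 * (2 * D_AB * (ftilde f s D xstar - finf) + C)"
  define a where "a t = (\<integral>\<^sup>+x. ennreal (ftilde f s D x - (INF y. ftilde f s D y)) \<partial>dssgd_iter D G \<gamma> x0 t)" for t
  define R where "R = norm (x0 - xstar) ^ 2 + real T * e"
  have "0 \<le> e" unfolding e_def using D_AB_nonneg ftilde_lower[of xstar] C_nonneg by simp
  have "(\<integral>\<^sup>+y. ennreal (norm (y - xstar) ^ 2) \<partial>dssgd_iter D G \<gamma> x0 T) + (\<Sum>t<T. ennreal \<gamma> * a t)
      \<le> (\<integral>\<^sup>+y. ennreal (norm (y - xstar) ^ 2) \<partial>dssgd_iter D G \<gamma> x0 0) + of_nat T * ennreal e"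
    unfolding a_def e_def
    by (rule ennreal_telescoping_le[where r = "\<lambda>t. \<integral>\<^sup>+y. ennreal (norm (y - xstar) ^ 2) \<partial>dssgd_iter D G \<gamma> x0 t",
          OF iterate_descent])
  also have "\<dots> = ennreal R"
    using \<open>0 \<le> e\<close> unfolding R_def
    by (simp add: nn_integral_return ennreal_plus ennreal_mult ennreal_of_nat_eq_real_of_nat)
  finally have "ennreal \<gamma> * (\<Sum>t<T. a t) \<le> ennreal R"
    by (simp add: sum_distrib_left) (meson add_increasing order_trans zero_le order_refl)
  then have "(\<Sum>t<T. a t) / of_nat T \<le> ennreal (R / (\<gamma> * real T))"
    using gamma_pos T \<open>0 \<le> e\<close> unfolding R_def by (intro ennreal_divide_le_of_mult_le) auto
  also have "R / (\<gamma> * real T) = norm (x0 - xstar) ^ 2 / (\<gamma> * real T)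
          + \<gamma> * (2 * ((INF y. ftilde f s D y) - (INF y. f y)) * (A + B * Lf * LSmax D) + C)"
    using gamma_pos T unfolding R_def e_def INF_ftilde finf_def D_AB_def
    by (simp add: field_simps power2_eq_square)
  finally show ?thesis
    unfolding a_def using T ftilde_measurable by (subst nn_integral_dssgd_avg) auto
qed

end

theorem mainTheorem12:
  fixes f :: "real^'n \<Rightarrow> real"
    and s x0 xstar :: "real^'n"
    and D :: "(real^'n^'n) measure"
    and G :: "real^'n^'n \<Rightarrow> real^'n \<Rightarrow> (real^'n) measure"
    and Lf A B C \<gamma> :: real
    and T :: nat
  assumes D_prob: "prob_space D"
    and D_sets: "sets D = sets borel"
    and D_mean: "integrable D (\<lambda>S. S)" "(\<integral>S. S \<partial>D) = mat 1"
    and D_second: "integrable D (\<lambda>S. transpose S ** S)"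
    and LSmax_fin: "\<exists>L. AE S in D. lambda_max (transpose S ** S) \<le> L"
    and f_convex: "convex_on UNIV f"
    and f_diff: "\<And>x. f differentiable (at x)"
    and f_smooth: "\<And>x h. f (x + h) \<le> f x + grad f x \<bullet> h + Lf / 2 * norm h ^ 2"
    and f_bdd: "bdd_below (range f)"
    and xstar_min: "\<And>x. ftilde f s D xstar \<le> ftilde f s D x"
    and G_prob: "\<And>S x. prob_space (G S x)"
    and G_sets: "\<And>S x. sets (G S x) = sets borel"
    and G_meas: "(\<lambda>(S, x). G S x) \<in> borel \<Otimes>\<^sub>M borel \<rightarrow>\<^sub>M subprob_algebra borel"
    and ABC_unbiased: "\<And>S x. integrable (G S x) (\<lambda>g. g) \<and>
                          (\<integral>g. g \<partial>G S x) = grad (fS f s S) x"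
    and ABC_second: "\<And>S x. (\<integral>\<^sup>+g. ennreal (norm g ^ 2) \<partial>G S x)
          \<le> ennreal (2 * A * (fS f s S x - (INF y. fS f s S y))
                     + B * norm (grad (fS f s S) x) ^ 2 + C)"
    and A_nn: "A \<ge> 0" and B_nn: "B \<ge> 0" and C_nn: "C \<ge> 0"
    and gamma_pos: "\<gamma> > 0"
    and gamma_le: "2 * \<gamma> * (A + B * Lf * LSmax D) \<le> 1"
    and T_pos: "T \<ge> 1"
  shows "(\<integral>\<^sup>+x. ennreal (ftilde f s D x - (INF y. ftilde f s D y)) \<partial>dssgd_avg D G \<gamma> x0 T)
     \<le> ennreal (norm (x0 - xstar) ^ 2 / (\<gamma> * real T)
          + \<gamma> * (2 * ((INF y. ftilde f s D y) - (INF y. f y)) * (A + B * Lf * LSmax D) + C))"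
proof -
  interpret dssgd_setting f s xstar D G Lf A B C \<gamma>
    by (rule dssgd_setting.intro[OF D_prob D_sets LSmax_fin f_convex f_diff f_smooth f_bdd xstar_min
          G_prob G_sets G_meas ABC_unbiased ABC_second A_nn B_nn C_nn gamma_pos gamma_le])
  show ?thesis by (rule expected_suboptimality_of_average_le[OF T_pos])
qed

end
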